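(* Let $\mu=(\mu_1,\mu_2,\dots,\mu_m)$ be a composition of $n$, let $\lambda\vdash n$ and let $T$ be a standard Young tableau of shape $\lambda$. The probability that a $\mu$ shuffle has RSK recording tableau $T$ equals $K_{\lambda\mu}\big/\binom{n}{\mu_1,\mu_2,\dots,\mu_m}$.
   Context: A $\mu$ shuffle of $n$ cards: break the deck into consecutive piles of sizes $\mu_1,\mu_2,\dots$ and choose uniformly at random one of the $\binom{n}{\mu_1,\mu_2,\dots}$ interleavings of the piles. Concretely, the resulting permutation $w$ is obtained from a uniformly random word with exactly $\mu_i$ occurrences of the letter $i$ by placing $1,\dots,\mu_1$ at the positions of the $1$'s left to right, the next $\mu_2$ integers at the positions of the $2$'s left to right, etc.; $w(p)$ is the integer at position $p$. The RSK recording tableau is obtained by row-inserting $w(1),\dots,w(n)$. $K_{\lambda\mu}$ (Kostka number) is the number of semistandard Young tableaux of shape $\lambda$ in which $i$ appears exactly $\mu_i$ times. *)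

theory Defs
  imports Complex_Main "HOL-Library.Multiset"
begin

text \<open>Tableaux are lists of rows (top row first); a shape is the list of row lengths.\<close>

definition is_composition :: "nat list \<Rightarrow> nat \<Rightarrow> bool" where
  "is_composition mu n \<longleftrightarrow> (\<forall>x\<in>set mu. 0 < x) \<and> sum_list mu = n"

definition is_partition :: "nat list \<Rightarrow> nat \<Rightarrow> bool" where
  "is_partition lam n \<longleftrightarrow> (\<forall>x\<in>set lam. 0 < x) \<and> sorted_wrt (\<ge>) lam \<and> sum_list lam = n"

definition shape :: "nat list list \<Rightarrow> nat list" where
  "shape T = map length T"

definition cols_strict :: "nat list list \<Rightarrow> bool" where
  "cols_strict T \<longleftrightarrow> (\<forall>i j. Suc i < length T \<and> j < length (T ! Suc i) \<longrightarrow> T ! i ! j < T ! Suc i ! j)"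

definition is_SYT :: "nat list \<Rightarrow> nat list list \<Rightarrow> bool" where
  "is_SYT lam T \<longleftrightarrow> shape T = lam \<and> (\<forall>r\<in>set T. sorted_wrt (<) r) \<and> cols_strict T
     \<and> mset (concat T) = mset [1..<sum_list lam + 1]"

definition is_SSYT :: "nat list \<Rightarrow> nat list \<Rightarrow> nat list list \<Rightarrow> bool" where
  "is_SSYT lam mu T \<longleftrightarrow> shape T = lam \<and> (\<forall>r\<in>set T. sorted r) \<and> cols_strict T
     \<and> set (concat T) \<subseteq> {1..length mu}
     \<and> (\<forall>i\<in>{1..length mu}. count_list (concat T) i = mu ! (i - 1))"

definition kostka :: "nat list \<Rightarrow> nat list \<Rightarrow> nat" where
  "kostka lam mu = card {T. is_SSYT lam mu T}"

definition multinomial :: "nat list \<Rightarrow> nat" where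
  "multinomial mu = fact (sum_list mu) div (\<Prod>x\<leftarrow>mu. fact x)"

fun row_bump :: "nat list \<Rightarrow> nat \<Rightarrow> nat list \<times> nat option" where
  "row_bump [] x = ([x], None)"
| "row_bump (y # ys) x = (if x < y then (x # ys, Some y)
                          else (let (ys', b) = row_bump ys x in (y # ys', b)))"

text \<open>Insert into a tableau; returns the new tableau and the (0-based) row of the new cell.\<close>
fun rs_insert :: "nat list list \<Rightarrow> nat \<Rightarrow> nat list list \<times> nat" where
  "rs_insert [] x = ([[x]], 0)"
| "rs_insert (r # rs) x = (case row_bump r x of
      (r', None) \<Rightarrow> (r' # rs, 0)
    | (r', Some y) \<Rightarrow> (let (rs', k) = rs_insert rs y in (r' # rs', Suc k)))"

definition add_to_row :: "nat list list \<Rightarrow> nat \<Rightarrow> nat \<Rightarrow> nat list list" where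
  "add_to_row Q k v = (if k < length Q then Q[k := Q ! k @ [v]] else Q @ [[v]])"

definition rsk_step :: "nat list list \<times> nat list list \<Rightarrow> nat \<times> nat \<Rightarrow> nat list list \<times> nat list list" where
  "rsk_step PQ px = (let (P, Q) = PQ; (p, x) = px; (P', k) = rs_insert P x
                     in (P', add_to_row Q k p))"

definition rsk :: "nat list \<Rightarrow> nat list list \<times> nat list list" where
  "rsk w = foldl rsk_step ([], []) (zip [1..<length w + 1] w)"

definition recording_tableau :: "nat list \<Rightarrow> nat list list" where
  "recording_tableau w = snd (rsk w)"

definition shuffle_words :: "nat list \<Rightarrow> nat list set" where
  "shuffle_words mu = {a. length a = sum_list mu \<and> set a \<subseteq> {1..length mu}
       \<and> (\<forall>i\<in>{1..length mu}. count_list a i = mu ! (i - 1))}"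

text \<open>Permutation (one-line notation, list of w(1..n)) associated with a word a:
  the j-th occurrence (from the left) of letter i receives mu_1+...+mu_(i-1)+j.\<close>
definition shuffle_perm :: "nat list \<Rightarrow> nat list \<Rightarrow> nat list" where
  "shuffle_perm mu a = map (\<lambda>p. sum_list (take (a ! p - 1) mu) + count_list (take (Suc p) a) (a ! p))
                           [0..<length a]"

definition shuffle_prob :: "nat list \<Rightarrow> nat list list \<Rightarrow> real" where
  "shuffle_prob mu T = real (card {a \<in> shuffle_words mu. recording_tableau (shuffle_perm mu a) = T})
                       / real (card (shuffle_words mu))"

end

(*
  RSK insertion is a bijection between words and pairs (P, Q) of tableaux of equal shape, where
  P is semistandard with the same content as the word and Q is standard; it is inverted by reverse
  bumping from the corner that holds the largest entry of Q. The permutation of a mu shuffle is the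
  standardization of its word (equal letters are numbered from left to right), and Schensted
  insertion commutes with undoing a standardization, so a shuffle and its word have the same
  recording tableau. Hence the mu shuffles with recording tableau T correspond to the semistandard
  tableaux of shape lam and content mu, while all mu shuffles correspond to the
  multinomial(mu) words of content mu.
*)
theory Submission
  imports Defs "HOL-Combinatorics.Multiset_Permutations"
begin

section \<open>Row bumping\<close>

lemma row_bump_SomeE:
  assumes "row_bump r x = (r', Some y)"
  obtains c where "c < length r" "r' = r[c := x]" "y = r ! c" "\<forall>j<c. r ! j \<le> x" "x < r ! c"
proof -
  from assms have "\<exists>c<length r. r' = r[c := x] \<and> y = r ! c \<and> (\<forall>j<c. r ! j \<le> x) \<and> x < r ! c"
  proof (induction r arbitrary: r')
    case (Cons z zs)
    show ?case
    proof (cases "x < z")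
      case True
      then show ?thesis using Cons.prems by (intro exI[of _ 0]) auto
    next
      case False
      then obtain zs' where zs': "row_bump zs x = (zs', Some y)" "r' = z # zs'"
        using Cons.prems by (auto split: prod.splits)
      from Cons.IH[OF zs'(1)] obtain c where "c < length zs" "zs' = zs[c := x]" "y = zs ! c"
        "\<forall>j<c. zs ! j \<le> x" "x < zs ! c" by blast
      with zs' False show ?thesis by (intro exI[of _ "Suc c"]) (auto simp: less_Suc_eq_0_disj)
    qed
  qed simp
  with that show ?thesis by blast
qed

lemma row_bump_eq_Some:
  "c < length r \<Longrightarrow> \<forall>j<c. r ! j \<le> x \<Longrightarrow> x < r ! c \<Longrightarrow> row_bump r x = (r[c := x], Some (r ! c))"
proof (induction r arbitrary: c)
  case (Cons z zs)
  then show ?case by (cases c) fastforce+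
qed simp

lemma row_bump_None_iff:
  "row_bump r x = (r', None) \<longleftrightarrow> r' = r @ [x] \<and> (\<forall>y\<in>set r. y \<le> x)"
proof (induction r arbitrary: r')
  case (Cons z zs)
  then show ?case by (cases "row_bump zs x") (auto split: option.splits)
qed auto

lemma sorted_list_update:
  assumes "sorted r" "\<forall>j<c. r ! j \<le> v" "\<forall>j<length r. c < j \<longrightarrow> v \<le> r ! j"
  shows "sorted (r[c := v])"
  unfolding sorted_iff_nth_mono
proof (intro allI impI)
  fix i j assume "i \<le> j" "j < length (r[c := v])"
  with assms sorted_nth_mono[OF assms(1), of i j] show "r[c := v] ! i \<le> r[c := v] ! j"
    by (cases "i = c"; cases "j = c") (auto simp: nth_list_update)
qed

definition column_strict_rows :: "nat list \<Rightarrow> nat list \<Rightarrow> bool" where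
  "column_strict_rows r s \<longleftrightarrow> length s \<le> length r \<and> (\<forall>j<length s. r ! j < s ! j)"

text \<open>The entry \<open>y\<close> bumped from column \<open>c\<close> of \<open>r\<close> lands in \<open>s\<close> weakly left of \<open>c\<close>,
  because \<open>s ! c > r ! c = y\<close>.\<close>

lemma column_strict_rows_bump:
  assumes "column_strict_rows r s" "row_bump r x = (r', Some y)" "row_bump s y = (s', b)"
  shows "column_strict_rows r' s'"
proof -
  obtain c where c: "c < length r" "r' = r[c := x]" "y = r ! c" "\<forall>j<c. r ! j \<le> x" "x < r ! c"
    using assms(2) by (rule row_bump_SomeE)
  have rs: "length s \<le> length r" "\<forall>j<length s. r ! j < s ! j"
    using assms(1) by (auto simp: column_strict_rows_def)
  have below_y: "r' ! j < y" if "j \<le> c" for j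
    using that c le_less_trans[of "r ! j" x "r ! c"] by (cases "j = c") (auto simp: nth_list_update)
  have y_less: "y < s ! c" if "c < length s" using that c rs by simp
  show ?thesis
  proof (cases b)
    case None
    then have s': "s' = s @ [y]" "\<forall>v\<in>set s. v \<le> y" using assms(3) row_bump_None_iff by auto
    with y_less nth_mem[of c s] have "length s \<le> c" by (cases "c < length s") fastforce+
    with c rs s' below_y show ?thesis
      by (auto simp: column_strict_rows_def nth_list_update nth_append less_Suc_eq)
  next
    case (Some z)
    then obtain d where d: "d < length s" "s' = s[d := y]" "\<forall>j<d. s ! j \<le> y"
      using assms(3) by (auto elim: row_bump_SomeE)
    with y_less have "d \<le> c" by (cases "c < d") auto
    with c d rs below_y show ?thesis
      by (auto simp: column_strict_rows_def nth_list_update intro: less_trans)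
  qed
qed

lemma column_strict_rows_unbump:
  assumes "column_strict_rows r s" "sorted r'" "sorted s'"
    and "row_bump r' x = (r, Some y)" "row_bump s' y = (s, b)"
  shows "column_strict_rows r' s'"
proof -
  obtain c where c: "c < length r'" "r = r'[c := x]" "y = r' ! c" "x < r' ! c"
    using assms(4) by (rule row_bump_SomeE)
  have rs: "length s \<le> length r" "\<forall>j<length s. r ! j < s ! j"
    using assms(1) by (auto simp: column_strict_rows_def)
  have y_less: "y < s ! j" if "c < j" "j < length s" for j
    using that c rs sorted_nth_mono[OF assms(2), of c j] by fastforce
  show ?thesis
  proof (cases b)
    case None
    then have s: "s = s' @ [y]" using assms(5) row_bump_None_iff by auto
    with y_less[of "length s'"] have "length s' \<le> c" by (cases "c < length s'") auto
    have "r' ! j < s' ! j" if "j < length s'" for j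
    proof -
      have "r ! j < s ! j" using that rs s by simp
      with that \<open>length s' \<le> c\<close> c s show ?thesis by (simp add: nth_append)
    qed
    with c rs s show ?thesis by (auto simp: column_strict_rows_def)
  next
    case (Some z)
    then obtain d where d: "d < length s'" "s = s'[d := y]" "y < s' ! d"
      using assms(5) by (auto elim: row_bump_SomeE)
    with y_less[of d] have "d \<le> c" by (cases "c < d") auto
    have "r' ! j < s' ! j" if "j < length s'" for j
    proof (cases "j = c")
      case True
      then show ?thesis
        using \<open>d \<le> c\<close> d c that sorted_nth_mono[OF assms(3), of d c] by (cases "c = d") auto
    next
      case False
      then have "r' ! j = r ! j" using c by simp
      with rs d that show ?thesis
        by (cases "j = d") (auto intro: less_trans)
    qed
    with c d rs show ?thesis by (auto simp: column_strict_rows_def)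
  qed
qed

section \<open>Tableaux and row insertion\<close>

fun is_tableau :: "nat list list \<Rightarrow> bool" where
  "is_tableau [] = True"
| "is_tableau [r] = (r \<noteq> [] \<and> sorted r)"
| "is_tableau (r # s # rs) = (r \<noteq> [] \<and> sorted r \<and> column_strict_rows r s \<and> is_tableau (s # rs))"

lemma is_tableau_Cons:
  "is_tableau (r # rs) \<longleftrightarrow> r \<noteq> [] \<and> sorted r \<and> is_tableau rs \<and> (rs \<noteq> [] \<longrightarrow> column_strict_rows r (hd rs))"
  by (cases rs) auto

lemma cols_strict_Cons:
  "cols_strict (r # rs) \<longleftrightarrow> cols_strict rs \<and> (rs \<noteq> [] \<longrightarrow> (\<forall>j<length (hd rs). r ! j < hd rs ! j))"
  by (cases rs) (auto simp: cols_strict_def nth_Cons split: nat.splits)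

lemma is_tableau_iff:
  "is_tableau P \<longleftrightarrow> (\<forall>r\<in>set P. r \<noteq> [] \<and> sorted r) \<and> cols_strict P \<and> sorted_wrt (\<ge>) (map length P)"
proof (induction P)
  case (Cons r rs)
  show ?case
  proof (cases rs)
    case (Cons s ss)
    have "sorted_wrt (\<ge>) (map length (s # ss)) \<Longrightarrow> length s \<le> length r \<Longrightarrow>
      \<forall>t\<in>set ss. length t \<le> length r" by auto
    with Cons.IH Cons show ?thesis
      by (auto simp: is_tableau_Cons cols_strict_Cons column_strict_rows_def)
  qed (simp add: cols_strict_def)
qed (simp add: cols_strict_def)

lemma is_tableau_sorted_rows: "is_tableau P \<Longrightarrow> r \<in> set P \<Longrightarrow> sorted r"
  by (simp add: is_tableau_iff)

lemma is_tableau_nonempty_rows: "is_tableau P \<Longrightarrow> [] \<notin> set P"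
  by (auto simp: is_tableau_iff)

lemma zero_notin_shape_iff: "0 \<notin> set (shape P) \<longleftrightarrow> [] \<notin> set P"
  by (auto simp: shape_def)

lemma is_tableau_column_strict_rows_nth:
  "is_tableau T \<Longrightarrow> Suc i < length T \<Longrightarrow> column_strict_rows (T ! i) (T ! Suc i)"
proof (induction T arbitrary: i rule: is_tableau.induct)
  case (3 r s rs)
  then show ?case by (cases i) auto
qed auto

definition add_cell :: "nat list \<Rightarrow> nat \<Rightarrow> nat list" where
  "add_cell sh k = (if k < length sh then sh[k := sh ! k + 1] else sh @ [1])"

lemma add_cell_Cons_0: "add_cell (a # sh) 0 = Suc a # sh"
  by (simp add: add_cell_def)

lemma add_cell_Cons_Suc: "add_cell (a # sh) (Suc k) = a # add_cell sh k"
  by (simp add: add_cell_def)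

lemma add_cell_inj:
  assumes "0 \<notin> set sh" "0 \<notin> set sh'" "add_cell sh k = add_cell sh' k"
  shows "sh = sh'"
proof -
  have update_neq_snoc: "sh[k := sh ! k + 1] \<noteq> sh' @ [1]"
    if "k < length sh" "\<not> k < length sh'" "0 \<notin> set sh" for sh sh' :: "nat list"
  proof
    assume eq: "sh[k := sh ! k + 1] = sh' @ [1]"
    then have "length sh = Suc (length sh')" by (metis length_list_update length_append_singleton)
    with that have "k = length sh'" by simp
    with eq that(1) have "sh ! k = 0" by (metis nth_list_update_eq nth_append_length add_right_cancel add_0)
    with that show False by (metis nth_mem)
  qed
  show ?thesis
  proof (cases "k < length sh"; cases "k < length sh'")
    assume k: "k < length sh" "k < length sh'"
    with assms(3) have eq: "sh[k := sh ! k + 1] = sh'[k := sh' ! k + 1]" by (simp add: add_cell_def)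
    then have "length sh = length sh'" by (metis length_list_update)
    moreover have "sh ! i = sh' ! i" if "i < length sh" for i
      using arg_cong[OF eq, of "\<lambda>xs. xs ! i"] that k \<open>length sh = length sh'\<close>
      by (cases "i = k") auto
    ultimately show ?thesis by (rule nth_equalityI)
  qed (use assms update_neq_snoc[of sh sh'] update_neq_snoc[of sh' sh] in
      \<open>auto simp: add_cell_def simp del: update_neq_snoc dest: sym\<close>)
qed

lemma mset_rs_insert: "rs_insert P x = (P', k) \<Longrightarrow> mset (concat P') = mset (concat P) + {#x#}"
proof (induction P arbitrary: x P' k)
  case (Cons r rs)
  then show ?case
    by (cases "row_bump r x") (auto simp: row_bump_None_iff mset_update elim!: row_bump_SomeE
        split: option.splits prod.splits)
qed auto

lemma shape_rs_insert: "rs_insert P x = (P', k) \<Longrightarrow> shape P' = add_cell (shape P) k"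
proof (induction P arbitrary: x P' k)
  case (Cons r rs)
  then show ?case
    by (cases "row_bump r x") (auto simp: row_bump_None_iff shape_def add_cell_Cons_0 add_cell_Cons_Suc
        elim!: row_bump_SomeE split: option.splits prod.splits)
qed (auto simp: shape_def add_cell_def)

lemma rs_insert_row_le: "rs_insert P x = (P', k) \<Longrightarrow> k \<le> length P"
  by (induction P arbitrary: x P' k) (auto split: option.splits prod.splits)

lemma hd_rs_insert:
  "rs_insert P x = (P', k) \<Longrightarrow> P' \<noteq> [] \<and> hd P' = (if P = [] then [x] else fst (row_bump (hd P) x))"
  by (cases P) (auto split: option.splits prod.splits)

lemma in_row_bump: "x \<in> set (fst (row_bump r x))"
  by (induction r) (auto split: prod.splits)

lemma is_tableau_rs_insert: "is_tableau P \<Longrightarrow> rs_insert P x = (P', k) \<Longrightarrow> is_tableau P'"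
proof (induction P arbitrary: x P' k)
  case (Cons r rs)
  have r: "r \<noteq> []" "sorted r" "is_tableau rs" "rs \<noteq> [] \<Longrightarrow> column_strict_rows r (hd rs)"
    using Cons.prems(1) by (auto simp: is_tableau_Cons)
  obtain r' b where rb: "row_bump r x = (r', b)" by fastforce
  show ?case
  proof (cases b)
    case None
    have "P' = r' # rs" using Cons.prems(2) rb None by simp
    moreover have "r' = r @ [x]" "\<forall>y\<in>set r. y \<le> x" using rb None row_bump_None_iff by auto
    ultimately show ?thesis using r
      by (auto simp: is_tableau_Cons sorted_append column_strict_rows_def nth_append)
  next
    case (Some y)
    obtain rs' k' where ins: "rs_insert rs y = (rs', k')" by fastforce
    have P': "P' = r' # rs'" using Cons.prems(2) rb Some ins by simp
    have "sorted r'"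
    proof -
      obtain c where c: "r' = r[c := x]" "\<forall>j<c. r ! j \<le> x" "x < r ! c"
        using rb Some by (auto elim: row_bump_SomeE)
      have "x \<le> r ! j" if "j < length r" "c < j" for j
        using that c(3) sorted_nth_mono[OF r(2), of c j] by simp
      with c r(2) show ?thesis by (simp add: sorted_list_update)
    qed
    moreover have "column_strict_rows r' (hd rs')"
    proof (cases rs)
      case Nil
      have "column_strict_rows r []" by (simp add: column_strict_rows_def)
      with Nil ins rb Some show ?thesis by (auto intro: column_strict_rows_bump)
    next
      case (Cons s ss)
      obtain s' b' where sb: "row_bump s y = (s', b')" by fastforce
      with Cons hd_rs_insert[OF ins] have "hd rs' = s'" by simp
      with Cons sb r(4) rb Some show ?thesis by (auto intro: column_strict_rows_bump)
    qed
    ultimately show ?thesis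
      using P' Cons.IH[OF r(3) ins] hd_rs_insert[OF ins] rb Some r(1)
      by (auto simp: is_tableau_Cons elim!: row_bump_SomeE)
  qed
qed simp

lemma row_bump_inj:
  assumes "sorted r" "sorted s" "length r = length s"
    and "row_bump r x = (r', Some y)" "row_bump s z = (r', Some y)"
  shows "r = s \<and> x = z"
proof -
  obtain c where c: "c < length r" "r' = r[c := x]" "y = r ! c" "x < r ! c"
    using assms(4) by (rule row_bump_SomeE)
  obtain d where d: "d < length s" "r' = s[d := z]" "y = s ! d" "z < s ! d"
    using assms(5) by (rule row_bump_SomeE)
  have "\<not> c < d"
  proof
    assume "c < d"
    then have "r ! d = z" "r ! c \<le> r ! d"
      using c d assms(3) sorted_nth_mono[OF assms(1), of c d]
      by (metis nth_list_update_eq nth_list_update_neq less_imp_neq, simp)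
    with c d show False by simp
  qed
  moreover have "\<not> d < c"
  proof
    assume "d < c"
    then have "s ! c = x" "s ! d \<le> s ! c"
      using c d assms(3) sorted_nth_mono[OF assms(2), of d c]
      by (metis nth_list_update_eq nth_list_update_neq less_imp_neq, simp)
    with c d show False by simp
  qed
  ultimately have "c = d" by simp
  with c d assms(3) have "x = z" by (metis nth_list_update_eq)
  moreover have "r = s"
    using c d \<open>c = d\<close> by (metis list_update_overwrite list_update_id)
  ultimately show ?thesis by simp
qed

lemma rs_insert_inj:
  "rs_insert P x = (P', k) \<Longrightarrow> rs_insert Q z = (P', k) \<Longrightarrow> shape P = shape Q \<Longrightarrow>
    \<forall>r\<in>set P. sorted r \<Longrightarrow> \<forall>r\<in>set Q. sorted r \<Longrightarrow> P = Q \<and> x = z"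
proof (induction P arbitrary: Q x z P' k)
  case Nil
  then show ?case by (auto simp: shape_def)
next
  case (Cons r rs)
  obtain s ss where Q: "Q = s # ss" and len: "length r = length s" "shape rs = shape ss"
    using Cons.prems(3) by (cases Q) (auto simp: shape_def)
  obtain r' b where rb: "row_bump r x = (r', b)" by fastforce
  obtain s' b' where sb: "row_bump s z = (s', b')" by fastforce
  show ?case
  proof (cases b)
    case None
    with Cons.prems Q rb sb have "b' = None" "r' # rs = s' # ss"
      by (auto split: option.splits prod.splits)
    with None rb sb len show ?thesis by (auto simp: Q row_bump_None_iff)
  next
    case (Some y)
    obtain rs' k' where ins: "rs_insert rs y = (rs', k')" by fastforce
    with Cons.prems(1) rb Some have P': "P' = r' # rs'" "k = Suc k'" by auto
    with Cons.prems(2) Q sb obtain y' where "b' = Some y'" "rs_insert ss y' = (rs', k')" "s' = r'"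
      by (auto split: option.splits prod.splits)
    moreover from this Cons.IH[OF ins] len Cons.prems(4,5) Q have "rs = ss \<and> y = y'" by simp
    ultimately show ?thesis
      using row_bump_inj[of r s x r' y z] Cons.prems(4,5) len rb sb Some Q by simp
  qed
qed

section \<open>Reverse bumping\<close>

text \<open>In a sorted row, \<open>unbump r z\<close> replaces the rightmost entry smaller than \<open>z\<close> by \<open>z\<close>
  and returns that entry.\<close>

definition unbump :: "nat list \<Rightarrow> nat \<Rightarrow> nat list \<times> nat" where
  "unbump r z = (let d = length (takeWhile (\<lambda>v. v < z) r) - 1 in (r[d := z], r ! d))"

lemma unbumpE:
  assumes "sorted r" "r \<noteq> []" "r ! 0 < z" "unbump r z = (r', x)"
  obtains d where "d < length r" "r' = r[d := z]" "x = r ! d"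
    "\<forall>j\<le>d. r ! j < z" "\<forall>j<length r. d < j \<longrightarrow> z \<le> r ! j"
proof
  define t where "t = length (takeWhile (\<lambda>v. v < z) r)"
  have "t \<le> length r" unfolding t_def by (rule length_takeWhile_le)
  moreover have "1 \<le> t" unfolding t_def using assms(2,3) by (cases r) auto
  ultimately show "t - 1 < length r" by simp
  show "r' = r[t - 1 := z]" "x = r ! (t - 1)"
    using assms(4) unfolding unbump_def t_def[symmetric] by (auto simp: Let_def)
  show "\<forall>j\<le>t - 1. r ! j < z"
  proof (intro allI impI)
    fix j assume "j \<le> t - 1"
    with \<open>1 \<le> t\<close> have j: "j < length (takeWhile (\<lambda>v. v < z) r)" unfolding t_def by simp
    then have "takeWhile (\<lambda>v. v < z) r ! j \<in> set (takeWhile (\<lambda>v. v < z) r)" by (rule nth_mem)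
    with j show "r ! j < z" by (auto simp: takeWhile_nth dest: set_takeWhileD)
  qed
  show "\<forall>j<length r. t - 1 < j \<longrightarrow> z \<le> r ! j"
  proof (intro allI impI)
    fix j assume "j < length r" "t - 1 < j"
    moreover have "\<not> r ! t < z" if "t < length r"
      using that nth_length_takeWhile[of "\<lambda>v. v < z" r] unfolding t_def by simp
    ultimately show "z \<le> r ! j" using sorted_nth_mono[OF assms(1), of t j] by fastforce
  qed
qed

lemma row_bump_unbump:
  assumes "sorted r" "r \<noteq> []" "r ! 0 < z" "unbump r z = (r', x)"
  shows "row_bump r' x = (r, Some z) \<and> sorted r' \<and> length r' = length r"
proof -
  obtain d where d: "d < length r" "r' = r[d := z]" "x = r ! d"
    and left: "\<forall>j\<le>d. r ! j < z" and right: "\<forall>j<length r. d < j \<longrightarrow> z \<le> r ! j"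
    using assms by (rule unbumpE)
  have "row_bump r' x = (r'[d := x], Some (r' ! d))"
    using d left sorted_nth_mono[OF assms(1)] by (intro row_bump_eq_Some) auto
  moreover have "sorted r'"
    using d left right assms(1) by (auto intro: sorted_list_update less_imp_le)
  ultimately show ?thesis using d by simp
qed

definition is_corner :: "nat list \<Rightarrow> nat \<Rightarrow> bool" where
  "is_corner sh k \<longleftrightarrow> k < length sh \<and> (Suc k < length sh \<longrightarrow> sh ! Suc k < sh ! k)"

lemma is_corner_Cons_Suc: "is_corner (a # sh) (Suc k) \<longleftrightarrow> is_corner sh k"
  by (simp add: is_corner_def)

lemma shape_Cons: "shape (r # rs) = length r # shape rs"
  by (simp add: shape_def)

fun remove_corner :: "nat list list \<Rightarrow> nat \<Rightarrow> nat list list" where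
  "remove_corner [] k = []"
| "remove_corner (r # rs) 0 = (if butlast r = [] then rs else butlast r # rs)"
| "remove_corner (r # rs) (Suc k) = r # remove_corner rs k"

lemma single_cell_corner:
  assumes "is_tableau (r # rs)" "is_corner (shape (r # rs)) 0" "butlast r = []"
  shows "rs = []"
proof (rule ccontr)
  assume "rs \<noteq> []"
  with assms(1) have "length (hd rs) < length r" "hd rs \<noteq> []" "r \<noteq> []"
    using assms(2) by (cases rs; auto simp: is_tableau_Cons is_corner_def shape_def)+
  with assms(3) show False by (cases r rule: rev_cases) auto
qed

lemma is_tableau_remove_corner_0:
  assumes "is_tableau (r # rs)" "is_corner (shape (r # rs)) 0"
  shows "is_tableau (remove_corner (r # rs) 0)"
proof (cases "butlast r = []")
  case True
  with assms single_cell_corner[OF assms True] show ?thesis by simp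
next
  case False
  have "column_strict_rows (butlast r) (hd rs)" if "rs \<noteq> []"
    using that assms by (cases rs) (auto simp: is_tableau_Cons is_corner_def shape_def
        column_strict_rows_def nth_butlast)
  with False assms(1) show ?thesis by (auto simp: is_tableau_Cons sorted_butlast)
qed

lemma is_tableau_remove_corner:
  "is_tableau T \<Longrightarrow> is_corner (shape T) k \<Longrightarrow> is_tableau (remove_corner T k)"
proof (induction T k rule: remove_corner.induct)
  case (2 r rs)
  then show ?case by (rule is_tableau_remove_corner_0)
next
  case (3 r rs k)
  then have IH: "is_tableau (remove_corner rs k)"
    by (simp add: is_tableau_Cons is_corner_Cons_Suc shape_Cons)
  have rs: "rs \<noteq> []" using 3(3) by (auto simp: shape_def is_corner_def)
  have "hd (remove_corner rs k) = hd rs \<or> hd (remove_corner rs k) = butlast (hd rs)"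
    if "remove_corner rs k \<noteq> []"
  proof (cases rs)
    case (Cons s ss)
    have "is_tableau (s # ss)" "is_corner (shape (s # ss)) k"
      using 3 Cons by (auto simp: is_tableau_Cons is_corner_Cons_Suc shape_Cons)
    with that Cons single_cell_corner[of s ss] show ?thesis by (cases k) auto
  qed (use that in simp)
  with 3(2) IH rs show ?case
    by (auto simp: is_tableau_Cons column_strict_rows_def nth_butlast)
qed simp

lemma add_to_row_remove_corner:
  "is_tableau T \<Longrightarrow> is_corner (shape T) k \<Longrightarrow> add_to_row (remove_corner T k) k (last (T ! k)) = T"
proof (induction T k rule: remove_corner.induct)
  case (2 r rs)
  then have "r \<noteq> []" "butlast r = [] \<Longrightarrow> rs = []"
    using single_cell_corner by (auto simp: is_tableau_Cons)
  then show ?case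
    by (cases "butlast r = []") (auto simp: add_to_row_def, metis append_butlast_last_id append_Nil)
next
  case (3 r rs k)
  then show ?case
    by (auto simp: add_to_row_def is_tableau_Cons is_corner_Cons_Suc shape_Cons)
qed (simp add: is_corner_def shape_def)

fun rs_delete :: "nat list list \<Rightarrow> nat \<Rightarrow> nat list list \<times> nat" where
  "rs_delete [] k = ([], 0)"
| "rs_delete (r # rs) 0 = (remove_corner (r # rs) 0, last r)"
| "rs_delete (r # rs) (Suc k) = (let (rs', y) = rs_delete rs k; (r', x) = unbump r y in (r' # rs', x))"

lemma rs_insert_remove_corner_0:
  assumes "is_tableau (r # rs)" "is_corner (shape (r # rs)) 0"
  shows "rs_insert (remove_corner (r # rs) 0) (last r) = (r # rs, 0)"
proof (cases "butlast r = []")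
  case True
  with assms(1) have "r = [last r]" by (metis append_butlast_last_id append_Nil is_tableau_Cons)
  with single_cell_corner[OF assms True] True show ?thesis by simp
next
  case False
  have r: "r \<noteq> []" "sorted r" using assms(1) by (auto simp: is_tableau_Cons)
  then have "\<forall>v\<in>set (butlast r). v \<le> last r"
    using sorted_append[of "butlast r" "[last r]"] by (simp add: append_butlast_last_id)
  with r(1) have "row_bump (butlast r) (last r) = (r, None)" by (simp add: row_bump_None_iff)
  with False show ?thesis by simp
qed

lemma rs_insert_rs_delete:
  "is_tableau P \<Longrightarrow> is_corner (shape P) k \<Longrightarrow> rs_delete P k = (P', x) \<Longrightarrow>
    is_tableau P' \<and> rs_insert P' x = (P, k)"
proof (induction P arbitrary: k P' x)
  case Nil
  then show ?case by (simp add: is_corner_def shape_def)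
next
  case (Cons r rs)
  have r: "r \<noteq> []" "sorted r" "is_tableau rs" using Cons.prems(1) by (auto simp: is_tableau_Cons)
  show ?case
  proof (cases k)
    case 0
    with Cons.prems rs_insert_remove_corner_0 is_tableau_remove_corner_0 show ?thesis by auto
  next
    case (Suc k')
    obtain rs' y where del: "rs_delete rs k' = (rs', y)" by fastforce
    obtain r' x' where ub: "unbump r y = (r', x')" by fastforce
    have P': "P' = r' # rs'" "x = x'" using Cons.prems(3) Suc del ub by auto
    have cor: "is_corner (shape rs) k'" using Cons.prems(2) Suc by (simp add: shape_Cons is_corner_Cons_Suc)
    then have rs: "rs \<noteq> []" by (auto simp: is_corner_def shape_def)
    with Cons.prems(1) have crs: "column_strict_rows r (hd rs)" by (simp add: is_tableau_Cons)
    from Cons.IH[OF r(3) cor del] have IH: "is_tableau rs'" "rs_insert rs' y = (rs, k')" by auto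
    have "y \<in> set (hd rs)" using hd_rs_insert[OF IH(2)] in_row_bump[of y] by (auto split: if_splits)
    then obtain c where "c < length (hd rs)" "hd rs ! c = y" by (metis in_set_conv_nth)
    with crs sorted_nth_mono[OF r(2), of 0 c] have "r ! 0 < y"
      by (auto simp: column_strict_rows_def)
    from row_bump_unbump[OF r(2,1) this ub]
    have u: "row_bump r' x' = (r, Some y)" "sorted r'" "length r' = length r" by auto
    have "column_strict_rows r' (hd rs')" if ne: "rs' \<noteq> []"
    proof -
      obtain b where "row_bump (hd rs') y = (hd rs, b)"
        using hd_rs_insert[OF IH(2)] ne by (metis prod.collapse)
      moreover have "sorted (hd rs')" using IH(1) ne by (cases rs') (auto simp: is_tableau_Cons)
      ultimately show ?thesis using column_strict_rows_unbump[OF crs u(2) _ u(1)] by blast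
    qed
    with u r IH P' Suc show ?thesis by (auto simp: is_tableau_Cons)
  qed
qed

section \<open>The Robinson-Schensted-Knuth correspondence\<close>

lemma rsk_Nil: "rsk [] = ([], [])"
  by (simp add: rsk_def)

lemma rsk_snoc:
  assumes "rs_insert (fst (rsk a)) x = (P', k)"
  shows "rsk (a @ [x]) = (P', add_to_row (snd (rsk a)) k (Suc (length a)))"
proof -
  have "[1..<length (a @ [x]) + 1] = [1..<length a + 1] @ [Suc (length a)]" by simp
  then have "zip [1..<length (a @ [x]) + 1] (a @ [x]) = zip [1..<length a + 1] a @ [(Suc (length a), x)]"
    by (simp del: upt_Suc)
  with assms show ?thesis by (cases "rsk a") (simp add: rsk_def rsk_step_def)
qed

lemma shape_add_to_row: "shape (add_to_row Q k v) = add_cell (shape Q) k"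
  by (auto simp: add_to_row_def add_cell_def shape_def map_update)

lemma add_to_row_Cons: "add_to_row (r # Q) k v = (case k of 0 \<Rightarrow> (r @ [v]) # Q | Suc k' \<Rightarrow> r # add_to_row Q k' v)"
  by (auto simp: add_to_row_def split: nat.splits)

lemma mset_add_to_row: "mset (concat (add_to_row Q k v)) = mset (concat Q) + {#v#}"
proof (induction Q arbitrary: k)
  case (Cons r Q)
  then show ?case by (simp add: add_to_row_Cons split: nat.splits)
qed (simp add: add_to_row_def)

lemma in_add_to_row_nth:
  assumes "v \<notin> set (concat Q)" "k \<le> length Q" "i < length (add_to_row Q k v)"
  shows "v \<in> set (add_to_row Q k v ! i) \<longleftrightarrow> i = k"
  using assms by (auto simp: add_to_row_def nth_list_update nth_append)

lemma add_to_row_inj: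
  assumes "[] \<notin> set Q" "v \<notin> set (concat Q)" "k \<le> length Q"
    and "[] \<notin> set Q'" "v \<notin> set (concat Q')" "k' \<le> length Q'"
    and "add_to_row Q k v = add_to_row Q' k' v"
  shows "Q = Q' \<and> k = k'"
proof
  have "filter (\<lambda>r. r \<noteq> []) (map (removeAll v) (add_to_row Q k v)) = Q"
    if "[] \<notin> set Q" "v \<notin> set (concat Q)" for Q k
  proof -
    have "map (removeAll v) Q = Q" using that by (simp add: map_idI)
    then show ?thesis
      using that by (auto simp: add_to_row_def map_update filter_id_conv)
  qed
  with assms show "Q = Q'" by metis
  have "k < length (add_to_row Q k v)" "k' < length (add_to_row Q' k' v)"
    using assms(3,6) by (auto simp: add_to_row_def)
  with in_add_to_row_nth[OF assms(2,3)] in_add_to_row_nth[OF assms(5,6)] assms(7)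
  show "k = k'" by metis
qed

lemma is_tableau_fst_rsk: "is_tableau (fst (rsk a))"
proof (induction a rule: rev_induct)
  case (snoc x a)
  obtain P' k where "rs_insert (fst (rsk a)) x = (P', k)" by fastforce
  with snoc show ?case by (simp add: rsk_snoc is_tableau_rs_insert)
qed (simp add: rsk_Nil)

lemma mset_fst_rsk: "mset (concat (fst (rsk a))) = mset a"
proof (induction a rule: rev_induct)
  case (snoc x a)
  obtain P' k where "rs_insert (fst (rsk a)) x = (P', k)" by fastforce
  with snoc show ?case by (simp add: rsk_snoc mset_rs_insert)
qed (simp add: rsk_Nil)

lemma shape_snd_rsk: "shape (snd (rsk a)) = shape (fst (rsk a))"
proof (induction a rule: rev_induct)
  case (snoc x a)
  obtain P' k where "rs_insert (fst (rsk a)) x = (P', k)" by fastforce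
  with snoc show ?case by (simp add: rsk_snoc shape_rs_insert shape_add_to_row)
qed (simp add: rsk_Nil)

lemma mset_snd_rsk: "mset (concat (snd (rsk a))) = mset [1..<length a + 1]"
proof (induction a rule: rev_induct)
  case (snoc x a)
  obtain P' k where "rs_insert (fst (rsk a)) x = (P', k)" by fastforce
  with snoc show ?case by (simp add: rsk_snoc mset_add_to_row)
qed (simp add: rsk_Nil)

lemma nonempty_rows_snd_rsk: "[] \<notin> set (snd (rsk a))"
  using is_tableau_nonempty_rows[OF is_tableau_fst_rsk] shape_snd_rsk[of a]
  by (metis zero_notin_shape_iff)

lemma rsk_inj: "length a = length b \<Longrightarrow> rsk a = rsk b \<Longrightarrow> a = b"
proof (induction a arbitrary: b rule: rev_induct)
  case (snoc x a)
  obtain b' y where b: "b = b' @ [y]" and len: "length b' = length a"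
    using snoc.prems(1) by (cases b rule: rev_cases) auto
  obtain P k where insa: "rs_insert (fst (rsk a)) x = (P, k)" by fastforce
  obtain P' k' where insb: "rs_insert (fst (rsk b')) y = (P', k')" by fastforce
  have "P = P'" and eq: "add_to_row (snd (rsk a)) k (Suc (length a)) = add_to_row (snd (rsk b')) k' (Suc (length a))"
    using snoc.prems(2) rsk_snoc[OF insa] rsk_snoc[OF insb] b len by auto
  have "Suc (length a) \<notin> set (concat (snd (rsk a)))" "Suc (length a) \<notin> set (concat (snd (rsk b')))"
    using mset_snd_rsk[of a] mset_snd_rsk[of b'] len by (metis atLeastLessThan_iff set_mset_mset set_upt
        less_irrefl Suc_eq_plus1)+
  moreover have "k \<le> length (snd (rsk a))" "k' \<le> length (snd (rsk b'))"
    using rs_insert_row_le[OF insa] rs_insert_row_le[OF insb] shape_snd_rsk[of a] shape_snd_rsk[of b']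
    by (metis length_map shape_def)+
  ultimately have Q: "snd (rsk a) = snd (rsk b')" "k = k'"
    using add_to_row_inj[OF _ _ _ _ _ _ eq] nonempty_rows_snd_rsk by blast+
  then have "shape (fst (rsk a)) = shape (fst (rsk b'))" by (metis shape_snd_rsk)
  then have "fst (rsk a) = fst (rsk b') \<and> x = y"
    using rs_insert_inj[OF insa] insb \<open>P = P'\<close> Q(2) is_tableau_fst_rsk is_tableau_sorted_rows by metis
  with Q have "rsk a = rsk b'" "x = y" by (simp_all add: prod_eq_iff)
  with snoc.IH[of b'] len b show ?case by simp
qed simp

lemma sorted_le_last: "sorted r \<Longrightarrow> v \<in> set r \<Longrightarrow> v \<le> last r"
  by (induction r) (auto simp: sorted_append)

lemma max_entry_at_corner:
  assumes "is_tableau T" "k < length T" "N \<in> set (T ! k)" "\<forall>v\<in>set (concat T). v \<le> N"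
  shows "is_corner (shape T) k \<and> last (T ! k) = N"
proof
  have row: "T ! k \<in> set T" "T ! k \<noteq> []" using assms(2,3) by auto
  have "N \<le> last (T ! k)"
    using sorted_le_last[OF is_tableau_sorted_rows[OF assms(1) row(1)] assms(3)] .
  moreover have "last (T ! k) \<le> N" using assms(4) row by auto
  ultimately show last: "last (T ! k) = N" by simp
  show "is_corner (shape T) k"
    unfolding is_corner_def
  proof (intro conjI impI)
    show "k < length (shape T)" using assms(2) by (simp add: shape_def)
    assume "Suc k < length (shape T)"
    then have below: "Suc k < length T" "column_strict_rows (T ! k) (T ! Suc k)"
      using is_tableau_column_strict_rows_nth[OF assms(1)] by (auto simp: shape_def)
    show "shape T ! Suc k < shape T ! k"
    proof (rule ccontr)
      assume "\<not> ?thesis"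
      then have "length (T ! k) \<le> length (T ! Suc k)" using below(1) by (simp add: shape_def)
      with row(2) have j: "length (T ! k) - 1 < length (T ! Suc k)" by (cases "T ! k") auto
      then have "N < T ! Suc k ! (length (T ! k) - 1)"
        using below(2) last row(2) by (auto simp: column_strict_rows_def last_conv_nth)
      moreover have "T ! Suc k ! (length (T ! k) - 1) \<in> set (concat T)"
        using j below(1) by (auto intro!: bexI[of _ "T ! Suc k"])
      ultimately show False using assms(4) by fastforce
    qed
  qed
qed

lemma rsk_surj:
  "is_tableau Q \<Longrightarrow> mset (concat Q) = mset [1..<n + 1] \<Longrightarrow> is_tableau P \<Longrightarrow> shape P = shape Q \<Longrightarrow>
    \<exists>a. length a = n \<and> rsk a = (P, Q)"
proof (induction n arbitrary: P Q)
  case 0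
  then have "Q = []" using is_tableau_nonempty_rows[of Q] by (cases Q) auto
  with 0 have "P = []" by (simp add: shape_def)
  with \<open>Q = []\<close> show ?case by (simp add: rsk_Nil)
next
  case (Suc n)
  have entries: "set (concat Q) = {1..Suc n}" using Suc.prems(2) by (metis set_mset_mset set_upt
      atLeastLessThanSuc_atLeastAtMost Suc_eq_plus1)
  then have "Suc n \<in> set (concat Q)" by simp
  then obtain row where "row \<in> set Q" "Suc n \<in> set row" by auto
  then obtain k where k: "k < length Q" "Suc n \<in> set (Q ! k)" by (auto simp: in_set_conv_nth)
  with entries max_entry_at_corner[OF Suc.prems(1) k] have cor: "is_corner (shape Q) k"
    and last: "last (Q ! k) = Suc n" by auto
  define Q' where "Q' = remove_corner Q k"
  have Q': "is_tableau Q'" "add_to_row Q' k (Suc n) = Q"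
    unfolding Q'_def using is_tableau_remove_corner[OF Suc.prems(1) cor]
      add_to_row_remove_corner[OF Suc.prems(1) cor] last by simp_all
  then have "mset (concat Q') = mset [1..<n + 1]" using mset_add_to_row[of Q' k "Suc n"] Suc.prems(2) by simp
  obtain P' x where del: "rs_delete P k = (P', x)" by fastforce
  with rs_insert_rs_delete Suc.prems(3,4) cor have P': "is_tableau P'" "rs_insert P' x = (P, k)" by metis+
  have "shape P' = shape Q'"
  proof (rule add_cell_inj)
    show "0 \<notin> set (shape P')" "0 \<notin> set (shape Q')"
      using P'(1) Q'(1) is_tableau_nonempty_rows zero_notin_shape_iff by blast+
    show "add_cell (shape P') k = add_cell (shape Q') k"
      using shape_rs_insert[OF P'(2)] shape_add_to_row[of Q' k "Suc n"] Q'(2) Suc.prems(4) by simp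
  qed
  with Suc.IH Q' P' \<open>mset (concat Q') = _\<close> obtain a where a: "length a = n" "rsk a = (P', Q')" by blast
  with rsk_snoc[of a x P k] P'(2) Q'(2) have "rsk (a @ [x]) = (P, Q)" by simp
  with a show ?case by (intro exI[of _ "a @ [x]"]) simp
qed

section \<open>Standardization\<close>

definition is_standardization :: "nat list \<Rightarrow> nat list \<Rightarrow> bool" where
  "is_standardization w a \<longleftrightarrow> length w = length a \<and>
     (\<forall>p<length a. \<forall>q<length a. a ! p < a ! q \<or> a ! p = a ! q \<and> p < q \<longrightarrow> w ! p < w ! q)"

fun ties_decrease_downwards :: "(nat \<Rightarrow> nat) \<Rightarrow> nat list list \<Rightarrow> bool" where
  "ties_decrease_downwards L [] = True"
| "ties_decrease_downwards L (r # rs) \<longleftrightarrow>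
    ties_decrease_downwards L rs \<and> (\<forall>u\<in>set r. \<forall>v\<in>set (concat rs). L u = L v \<longrightarrow> v < u)"

lemma row_bump_map:
  "\<forall>y\<in>set r. x < y \<longleftrightarrow> L x < L y \<Longrightarrow>
    row_bump (map L r) (L x) = map_prod (map L) (map_option L) (row_bump r x)"
  by (induction r) (auto split: prod.splits)

lemma less_iff_label_less:
  fixes L :: "nat \<Rightarrow> 'a::linorder"
  assumes "mono_on D L" "x \<in> D" "y \<in> D" "L y = L x \<Longrightarrow> y < x"
  shows "x < y \<longleftrightarrow> L x < L y"
proof
  assume "x < y"
  with assms have "L x \<le> L y" "L x \<noteq> L y" by (auto intro: mono_onD)
  then show "L x < L y" by simp
next
  assume "L x < L y"
  with assms show "x < y" using mono_onD[OF assms(1), of y x] by fastforce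
qed

lemma ties_after_bump:
  fixes L :: "nat \<Rightarrow> 'a::linorder"
  assumes "mono_on D L" "set r \<subseteq> D" "x \<in> D" "sorted r" "distinct r"
    and "row_bump r x = (r', Some y)" "L x < L y"
    and "\<forall>u\<in>set r. \<forall>v\<in>V. L u = L v \<longrightarrow> v < u" "\<forall>v\<in>V. L v = L x \<longrightarrow> v < x"
  shows "\<forall>u\<in>set r'. \<forall>v\<in>insert y V. L u = L v \<longrightarrow> v < u"
proof (intro ballI impI)
  obtain c where c: "c < length r" "r' = r[c := x]" "y = r ! c" "\<forall>j<c. r ! j \<le> x"
    using assms(6) by (rule row_bump_SomeE)
  fix u v assume u: "u \<in> set r'" and v: "v \<in> insert y V" and Luv: "L u = L v"
  from u c assms(5) have u_cases: "u = x \<or> u \<in> set r \<and> u \<noteq> y" by (auto simp: set_update_distinct)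
  show "v < u"
  proof (cases "v = y")
    case False
    with u_cases v Luv assms(8,9) show ?thesis by auto
  next
    case True
    with u_cases Luv assms(7) have "u \<in> set r" "u \<noteq> y" by auto
    then obtain i where i: "i < length r" "u = r ! i" by (auto simp: in_set_conv_nth)
    have "y < u"
    proof (rule ccontr)
      assume "\<not> y < u"
      with \<open>u \<noteq> y\<close> i c sorted_nth_mono[OF assms(4), of c i] have "u \<le> x" by (cases "i < c") auto
      moreover have "u \<in> D" using i assms(2) by auto
      ultimately have "L u \<le> L x" using mono_onD[OF assms(1) _ assms(3)] by blast
      with Luv True assms(7) show False by simp
    qed
    with True show ?thesis by simp
  qed
qed

text \<open>Relabelling commutes with bumping as long as the inserted entry exceeds every entry
  with the same label; the invariant \<open>ties_decrease_downwards\<close> provides this for the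
  entries bumped into lower rows.\<close>

lemma rs_insert_map:
  assumes "mono_on D L"
  shows "set (concat P) \<subseteq> D \<Longrightarrow> x \<in> D \<Longrightarrow> distinct (concat P) \<Longrightarrow> \<forall>r\<in>set P. sorted r \<Longrightarrow>
    ties_decrease_downwards L P \<Longrightarrow> \<forall>z\<in>set (concat P). L z = L x \<longrightarrow> z < x \<Longrightarrow>
    rs_insert P x = (P', k) \<Longrightarrow>
    rs_insert (map (map L) P) (L x) = (map (map L) P', k) \<and> ties_decrease_downwards L P'"
proof (induction P arbitrary: x P' k)
  case (Cons r rs)
  have ties_r: "\<forall>u\<in>set r. \<forall>v\<in>set (concat rs). L u = L v \<longrightarrow> v < u"
    using Cons.prems(5) by simp
  have cmp: "\<forall>y\<in>set r. x < y \<longleftrightarrow> L x < L y"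
    using Cons.prems(1,2,6) less_iff_label_less[OF assms] by auto
  obtain r' b where rb: "row_bump r x = (r', b)" by fastforce
  note bump_map = row_bump_map[OF cmp, unfolded rb]
  show ?case
  proof (cases b)
    case None
    then have "P' = r' # rs" "k = 0" "r' = r @ [x]" using Cons.prems(7) rb row_bump_None_iff by auto
    with Cons.prems(5,6) None bump_map show ?thesis by auto
  next
    case (Some y)
    obtain rs' k' where ins: "rs_insert rs y = (rs', k')" by fastforce
    have P': "P' = r' # rs'" "k = Suc k'" using Cons.prems(7) rb Some ins by auto
    obtain c where c: "c < length r" "r' = r[c := x]" "y = r ! c" "x < r ! c"
      using rb Some by (auto elim: row_bump_SomeE)
    then have y: "y \<in> set r" "L x < L y" using cmp by auto
    have IH: "rs_insert (map (map L) rs) (L y) = (map (map L) rs', k') \<and> ties_decrease_downwards L rs'"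
      using Cons.prems(1-5) ties_r y(1) by (intro Cons.IH[OF _ _ _ _ _ _ ins]) auto
    have rs': "set (concat rs') = insert y (set (concat rs))"
      using mset_rs_insert[OF ins] by (metis set_mset_mset set_mset_add_mset_insert add_mset_add_single)
    have "\<forall>u\<in>set r'. \<forall>v\<in>insert y (set (concat rs)). L u = L v \<longrightarrow> v < u"
      using Cons.prems(1-4,6) ties_r
      by (intro ties_after_bump[OF assms _ _ _ _ rb[unfolded Some] y(2)]) auto
    with IH P' bump_map Some rs' show ?thesis by simp
  qed
qed auto

lemma rsk_map:
  assumes "distinct w" "mono_on (set w) L"
    and "\<forall>p q. p < q \<longrightarrow> q < length w \<longrightarrow> L (w ! p) = L (w ! q) \<longrightarrow> w ! p < w ! q"
  shows "rsk (map L w) = (map (map L) (fst (rsk w)), snd (rsk w))"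
proof -
  have "rsk (map L w) = (map (map L) (fst (rsk w)), snd (rsk w)) \<and> ties_decrease_downwards L (fst (rsk w))"
    using assms
  proof (induction w rule: rev_induct)
    case (snoc x v)
    have ties: "\<forall>p q. p < q \<longrightarrow> q < length v \<longrightarrow> L (v ! p) = L (v ! q) \<longrightarrow> v ! p < v ! q"
    proof (intro allI impI)
      fix p q assume "p < q" "q < length v" "L (v ! p) = L (v ! q)"
      with snoc.prems(3)[rule_format, of p q] show "v ! p < v ! q" by (simp add: nth_append)
    qed
    have IH: "rsk (map L v) = (map (map L) (fst (rsk v)), snd (rsk v))" "ties_decrease_downwards L (fst (rsk v))"
      using snoc.IH snoc.prems(1,2) ties by (auto intro: mono_on_subset)
    have entries: "set (concat (fst (rsk v))) = set v"
      by (metis mset_fst_rsk set_mset_mset)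
    have "z < x" if z: "z \<in> set v" and Lz: "L z = L x" for z
    proof -
      obtain p where "p < length v" "z = v ! p" using z by (auto simp: in_set_conv_nth)
      with snoc.prems(3)[rule_format, of p "length v"] Lz show ?thesis by (simp add: nth_append)
    qed
    moreover obtain P' k where ins: "rs_insert (fst (rsk v)) x = (P', k)" by fastforce
    ultimately have "rs_insert (map (map L) (fst (rsk v))) (L x) = (map (map L) P', k)
      \<and> ties_decrease_downwards L P'"
      using snoc.prems(1,2) IH(2) entries is_tableau_sorted_rows[OF is_tableau_fst_rsk]
      by (intro rs_insert_map[OF snoc.prems(2) _ _ _ _ _ _ ins])
        (auto simp: mset_eq_imp_distinct_iff[OF mset_fst_rsk])
    with IH(1) ins show ?case by (simp add: rsk_snoc)
  qed (simp add: rsk_Nil)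
  then show ?thesis ..
qed

lemma distinct_standardization:
  assumes "is_standardization w a"
  shows "distinct w"
proof -
  have w: "length w = length a"
    "\<And>p q. p < length a \<Longrightarrow> q < length a \<Longrightarrow> a ! p < a ! q \<or> a ! p = a ! q \<and> p < q \<Longrightarrow> w ! p < w ! q"
    using assms by (auto simp: is_standardization_def)
  have "w ! p \<noteq> w ! q" if "p < q" "q < length w" for p q
    using w(1) w(2)[of p q] w(2)[of q p] that
    by (cases "a ! p" "a ! q" rule: linorder_cases) (auto dest: less_imp_neq)
  then show ?thesis
    unfolding distinct_conv_nth by (metis linorder_neqE_nat)
qed

lemma standardization_relabelling:
  assumes "is_standardization w a"
  obtains L where "mono_on (set w) L" "map L w = a"
proof
  have w: "length w = length a" "\<forall>p<length a. \<forall>q<length a. a ! p < a ! q \<or> a ! p = a ! q \<and> p < q \<longrightarrow> w ! p < w ! q"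
    using assms by (auto simp: is_standardization_def)
  define L where "L = (\<lambda>v. a ! inv_into {..<length w} ((!) w) v)"
  have inj: "inj_on ((!) w) {..<length w}"
    using distinct_standardization[OF assms] by (simp add: inj_on_nth)
  then have L: "L (w ! p) = a ! p" if "p < length w" for p
    using that by (simp add: L_def inv_into_f_f)
  show "map L w = a" using w(1) L by (simp add: list_eq_iff_nth_eq)
  show "mono_on (set w) L"
  proof (rule mono_onI)
    fix u v assume "u \<in> set w" "v \<in> set w" "u \<le> v"
    then obtain p q where pq: "p < length w" "q < length w" "u = w ! p" "v = w ! q"
      by (auto simp: in_set_conv_nth)
    show "L u \<le> L v"
    proof (rule ccontr)
      assume "\<not> L u \<le> L v"
      with pq L have "a ! q < a ! p" by simp
      with pq w have "v < u" by auto
      with \<open>u \<le> v\<close> show False by simp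
    qed
  qed
qed

lemma recording_tableau_standardization:
  assumes "is_standardization w a"
  shows "snd (rsk w) = snd (rsk a)"
proof -
  obtain L where L: "mono_on (set w) L" "map L w = a"
    using assms by (rule standardization_relabelling)
  have "\<forall>p q. p < q \<longrightarrow> q < length w \<longrightarrow> L (w ! p) = L (w ! q) \<longrightarrow> w ! p < w ! q"
    using assms L(2) by (auto simp: is_standardization_def)
  from rsk_map[OF distinct_standardization[OF assms] L(1) this] L(2) show ?thesis by simp
qed

section \<open>Shuffles and counting\<close>

lemma count_list_take_mono: "i \<le> j \<Longrightarrow> count_list (take i xs) v \<le> count_list (take j xs) v"
  by (metis append_take_drop_id count_list_append le_add1 min.absorb1 take_take)

lemma sum_list_take_mono: "i \<le> j \<Longrightarrow> sum_list (take i (xs :: nat list)) \<le> sum_list (take j xs)"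
  by (metis append_take_drop_id sum_list_append le_add1 min.absorb1 take_take)

text \<open>The entry of \<open>shuffle_perm mu a\<close> at a position carrying letter \<open>i\<close> lies in the block
  \<open>S (i - 1) < _ \<le> S i\<close> of partial sums of \<open>mu\<close>, and within a block the entries increase
  from left to right.\<close>

lemma shuffle_perm_standardization:
  assumes "a \<in> shuffle_words mu"
  shows "is_standardization (shuffle_perm mu a) a"
proof -
  define w where "w = shuffle_perm mu a"
  define S where "S i = sum_list (take i mu)" for i
  have a: "set a \<subseteq> {1..length mu}" "\<forall>i\<in>{1..length mu}. count_list a i = mu ! (i - 1)"
    using assms by (auto simp: shuffle_words_def)
  have w: "w ! p = S (a ! p - 1) + count_list (take (Suc p) a) (a ! p)" if "p < length a" for p
    using that unfolding w_def shuffle_perm_def S_def by simp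
  have letter: "1 \<le> a ! p \<and> a ! p \<le> length mu" if "p < length a" for p
    using a(1) that nth_mem by fastforce
  have lower: "S (a ! p - 1) < w ! p" if "p < length a" for p
  proof -
    have "a ! p \<in> set (take (Suc p) a)" using that by (simp add: take_Suc_conv_app_nth)
    then have "0 < count_list (take (Suc p) a) (a ! p)" by (metis count_list_0_iff gr0I)
    then show ?thesis using w[OF that] by simp
  qed
  have upper: "w ! p \<le> S (a ! p)" if p: "p < length a" for p
  proof -
    have "count_list (take (Suc p) a) (a ! p) \<le> count_list (take (length a) a) (a ! p)"
      using p by (intro count_list_take_mono) simp
    also have "\<dots> = mu ! (a ! p - 1)" using a(2) letter[OF p] by simp
    moreover obtain i where i: "a ! p = Suc i" "i < length mu" using letter[OF p] by (cases "a ! p") auto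
    then have "S (a ! p) = S (a ! p - 1) + mu ! (a ! p - 1)" by (simp add: S_def take_Suc_conv_app_nth)
    ultimately show ?thesis using w[OF p] by simp
  qed
  have less: "w ! p < w ! q" if "p < length a" "q < length a" "a ! p < a ! q" for p q
  proof -
    have "S (a ! p) \<le> S (a ! q - 1)" unfolding S_def using that by (intro sum_list_take_mono) simp
    then show ?thesis using upper[OF that(1)] lower[OF that(2)] by simp
  qed
  have tie: "w ! p < w ! q" if "p < q" "q < length a" "a ! p = a ! q" for p q
  proof -
    have "count_list (take (Suc p) a) (a ! p) \<le> count_list (take q a) (a ! p)"
      using that by (intro count_list_take_mono) simp
    moreover have "count_list (take (Suc q) a) (a ! q) = count_list (take q a) (a ! q) + 1"
      using that by (simp add: take_Suc_conv_app_nth)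
    ultimately show ?thesis using w[of p] w[of q] that by simp
  qed
  show ?thesis
    unfolding is_standardization_def w_def[symmetric]
  proof (intro conjI allI impI)
    show "length w = length a" by (simp add: w_def shuffle_perm_def)
    fix p q assume "p < length a" "q < length a" "a ! p < a ! q \<or> a ! p = a ! q \<and> p < q"
    with less tie show "w ! p < w ! q" by blast
  qed
qed

definition content :: "nat list \<Rightarrow> nat multiset" where
  "content mu = (\<Sum>i<length mu. replicate_mset (mu ! i) (Suc i))"

lemma count_content: "count (content mu) v = (if 1 \<le> v \<and> v \<le> length mu then mu ! (v - 1) else 0)"
proof -
  have "count (content mu) v = (\<Sum>i<length mu. if Suc i = v then mu ! i else 0)"
    unfolding content_def by (auto simp: count_sum intro!: sum.cong)
  also have "\<dots> = (\<Sum>i\<in>{..<length mu} \<inter> {v - 1}. if Suc i = v then mu ! i else 0)"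
    by (rule sum.mono_neutral_right) auto
  also have "\<dots> = (if 1 \<le> v \<and> v \<le> length mu then mu ! (v - 1) else 0)"
    by (cases "1 \<le> v \<and> v \<le> length mu") (auto simp: Int_insert_right)
  finally show ?thesis .
qed

lemma size_content: "size (content mu) = sum_list mu"
  by (simp add: content_def sum_list_sum_nth atLeast0LessThan)

lemma mset_eq_content_iff:
  "mset xs = content mu \<longleftrightarrow> set xs \<subseteq> {1..length mu} \<and> (\<forall>i\<in>{1..length mu}. count_list xs i = mu ! (i - 1))"
proof
  assume xs: "mset xs = content mu"
  show "set xs \<subseteq> {1..length mu} \<and> (\<forall>i\<in>{1..length mu}. count_list xs i = mu ! (i - 1))"
  proof
    show "set xs \<subseteq> {1..length mu}"
    proof
      fix v assume "v \<in> set xs"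
      then have "0 < count (content mu) v" using xs by (metis count_greater_zero_iff set_mset_mset)
      then show "v \<in> {1..length mu}" by (auto simp: count_content split: if_splits)
    qed
    show "\<forall>i\<in>{1..length mu}. count_list xs i = mu ! (i - 1)"
      using xs by (auto simp: count_content simp flip: count_mset)
  qed
next
  assume xs: "set xs \<subseteq> {1..length mu} \<and> (\<forall>i\<in>{1..length mu}. count_list xs i = mu ! (i - 1))"
  show "mset xs = content mu"
  proof (rule multiset_eqI)
    fix v
    show "count (mset xs) v = count (content mu) v"
    proof (cases "v \<in> {1..length mu}")
      case False
      with xs have "v \<notin> set xs" by blast
      with False show ?thesis by (auto simp: count_content count_mset)
    qed (use xs in \<open>simp add: count_content count_mset\<close>)
  qed
qed

lemma shuffle_words_eq: "shuffle_words mu = {a. mset a = content mu}"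
proof (intro set_eqI iffI)
  fix a assume "a \<in> shuffle_words mu"
  then show "a \<in> {a. mset a = content mu}" by (simp add: shuffle_words_def mset_eq_content_iff)
next
  fix a assume "a \<in> {a. mset a = content mu}"
  then have a: "mset a = content mu" by simp
  then have "length a = sum_list mu" by (metis size_content size_mset)
  with a show "a \<in> shuffle_words mu" unfolding shuffle_words_def mset_eq_content_iff by simp
qed

lemma card_shuffle_words: "card (shuffle_words mu) = multinomial mu"
proof -
  let ?M = "content mu"
  have "(\<Prod>v\<in>set_mset ?M. fact (count ?M v)) = (\<Prod>v\<in>Suc ` {..<length mu}. fact (count ?M v) :: nat)"
  proof (rule prod.mono_neutral_left)
    show "set_mset ?M \<subseteq> Suc ` {..<length mu}"
    proof
      fix v assume "v \<in># ?M"
      then have "0 < count ?M v" by simp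
      then have "1 \<le> v \<and> v \<le> length mu" unfolding count_content by (simp split: if_splits)
      then show "v \<in> Suc ` {..<length mu}" by (auto intro: image_eqI[of _ _ "v - 1"])
    qed
  qed (auto simp: not_in_iff)
  also have "\<dots> = (\<Prod>i<length mu. fact (mu ! i))"
    by (simp add: prod.reindex count_content)
  also have "\<dots> = prod_list (map fact mu)"
    by (simp add: prod.list_conv_set_nth atLeast0LessThan)
  finally show ?thesis
    by (simp add: shuffle_words_eq multinomial_def size_content card_permutations_of_multiset(1)
        flip: permutations_of_multiset_def)
qed

lemma is_SSYT_iff:
  assumes "\<forall>x\<in>set lam. 0 < x" "sorted_wrt (\<ge>) lam"
  shows "is_SSYT lam mu P \<longleftrightarrow> is_tableau P \<and> shape P = lam \<and> mset (concat P) = content mu"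
proof -
  have "[] \<notin> set P" if "shape P = lam" using that assms(1) by (auto simp: shape_def)
  with assms(2) show ?thesis
    unfolding is_SSYT_def is_tableau_iff mset_eq_content_iff by (auto simp: shape_def)
qed

lemma is_SYT_imp_tableau:
  "is_SYT lam T \<Longrightarrow> \<forall>x\<in>set lam. 0 < x \<Longrightarrow> sorted_wrt (\<ge>) lam \<Longrightarrow> is_tableau T"
  unfolding is_SYT_def is_tableau_iff shape_def by (auto intro: strict_sorted_imp_sorted)

lemma card_words_with_recording_tableau:
  assumes "is_tableau Q" "mset (concat Q) = mset [1..<n + 1]"
  shows "card {a. mset a = M \<and> snd (rsk a) = Q} = card {P. is_tableau P \<and> shape P = shape Q \<and> mset (concat P) = M}"
proof (rule bij_betw_same_card[of "\<lambda>a. fst (rsk a)"], rule bij_betwI')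
  fix a b assume "a \<in> {a. mset a = M \<and> snd (rsk a) = Q}" "b \<in> {a. mset a = M \<and> snd (rsk a) = Q}"
  then have "length a = length b" "snd (rsk a) = snd (rsk b)" by (auto dest: mset_eq_length)
  with rsk_inj show "fst (rsk a) = fst (rsk b) \<longleftrightarrow> a = b" by (metis prod_eq_iff)
next
  fix a assume "a \<in> {a. mset a = M \<and> snd (rsk a) = Q}"
  then show "fst (rsk a) \<in> {P. is_tableau P \<and> shape P = shape Q \<and> mset (concat P) = M}"
    using is_tableau_fst_rsk shape_snd_rsk[of a, symmetric] mset_fst_rsk[of a] by simp
next
  fix P assume "P \<in> {P. is_tableau P \<and> shape P = shape Q \<and> mset (concat P) = M}"
  with rsk_surj[OF assms] obtain a where "rsk a = (P, Q)" by blast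
  with \<open>P \<in> _\<close> mset_fst_rsk[of a] show "\<exists>a\<in>{a. mset a = M \<and> snd (rsk a) = Q}. P = fst (rsk a)"
    by (intro bexI[of _ a]) auto
qed

theorem lemma7p4:
  fixes mu lam :: "nat list" and T :: "nat list list" and n :: nat
  assumes "is_composition mu n"
    and "is_partition lam n"
    and "is_SYT lam T"
  shows "shuffle_prob mu T = real (kostka lam mu) / real (multinomial mu)"
proof -
  have lam: "\<forall>x\<in>set lam. 0 < x" "sorted_wrt (\<ge>) lam" using assms(2) by (auto simp: is_partition_def)
  have T: "is_tableau T" "shape T = lam" "mset (concat T) = mset [1..<sum_list lam + 1]"
    using assms(3) is_SYT_imp_tableau[OF assms(3) lam] by (auto simp: is_SYT_def)
  have "{a \<in> shuffle_words mu. recording_tableau (shuffle_perm mu a) = T} = {a. mset a = content mu \<and> snd (rsk a) = T}"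
    using recording_tableau_standardization[OF shuffle_perm_standardization]
    by (auto simp: shuffle_words_eq recording_tableau_def)
  moreover have "{P. is_SSYT lam mu P} = {P. is_tableau P \<and> shape P = shape T \<and> mset (concat P) = content mu}"
    using is_SSYT_iff[OF lam] T(2) by auto
  ultimately show ?thesis
    using card_words_with_recording_tableau[OF T(1,3), of "content mu"]
    by (simp add: shuffle_prob_def kostka_def card_shuffle_words)
qed

end
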